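(* For a suitable choice of absolute constants $c_0>0$, $c_5>0$, the following holds: for $x\geqslant y\geqslant 2$ with $\psi(y)>2\log x$, every integer $q$ with $q\leqslant y^{c_0/\log_2y}$, every non-principal Dirichlet character $\chi$ modulo $q$ and every $\tau\in\mathbb R$, $$\Big|\frac{Z(\beta+i\tau,\chi;y)}{Z_q(\beta,y)}\Big|\leqslant e^{-c_5\mathcal W_q(y,\tau;\chi)}.$$
   Context: For a prime $p$, $\nu_p:=\lfloor\log y/\log p\rfloor$; $\psi(y):=\sum_{p\leqslant y}\nu_p\log p$; $\log_2=\log\log$. For $\Re s>0$, $Z_q(s,y):=\prod_{p\leqslant y,\,p\nmid q}\frac{1-p^{-(\nu_p+1)s}}{1-p^{-s}}$, $Z(s,y):=Z_1(s,y)$, and for a Dirichlet character $\chi$, $Z(s,\chi;y):=\prod_{p\leqslant y}\frac{1-\chi(p)^{\nu_p+1}p^{-(\nu_p+1)s}}{1-\chi(p)p^{-s}}$. When $\psi(y)>2\log x$, $\beta=\beta(x,y)$ is the unique $\sigma>0$ with $-Z'(\sigma,y)/Z(\sigma,y)=\log x$. Finally $\mathcal W_q(y,\tau;\chi):=\sum_{p\leqslant y,\,p\nmid q}\frac{\{1-\Re(\chi(p)p^{-i\tau})\}^2}{p^\beta}$. *)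

theory Defs
  imports "HOL-Analysis.Analysis" "HOL-Computational_Algebra.Primes"
begin

definition nu :: "real \<Rightarrow> nat \<Rightarrow> nat" where
  "nu y p = nat \<lfloor>ln y / ln (real p)\<rfloor>"

definition psi :: "real \<Rightarrow> real" where
  "psi y = (\<Sum>p | prime p \<and> real p \<le> y. real (nu y p) * ln (real p))"

definition Zq :: "nat \<Rightarrow> real \<Rightarrow> real \<Rightarrow> real" where
  "Zq q s y = (\<Prod>p | prime p \<and> real p \<le> y \<and> \<not> p dvd q.
      (1 - real p powr (- (real (nu y p + 1) * s))) / (1 - real p powr (- s)))"

definition Z :: "real \<Rightarrow> real \<Rightarrow> real" where
  "Z s y = Zq 1 s y"

definition Zchi :: "complex \<Rightarrow> (nat \<Rightarrow> complex) \<Rightarrow> real \<Rightarrow> complex" where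
  "Zchi s chi y = (\<Prod>p | prime p \<and> real p \<le> y.
      (1 - chi p ^ (nu y p + 1) * of_nat p powr (- (of_nat (nu y p + 1) * s)))
      / (1 - chi p * of_nat p powr (- s)))"

definition saddle :: "real \<Rightarrow> real \<Rightarrow> real" where
  "saddle x y = (THE \<sigma>. \<sigma> > 0 \<and> - deriv (\<lambda>s. Z s y) \<sigma> / Z \<sigma> y = ln x)"

definition W :: "nat \<Rightarrow> real \<Rightarrow> real \<Rightarrow> (nat \<Rightarrow> complex) \<Rightarrow> real \<Rightarrow> real" where
  "W q y \<tau> chi \<beta> = (\<Sum>p | prime p \<and> real p \<le> y \<and> \<not> p dvd q.
      (1 - Re (chi p * of_nat p powr (- (\<i> * of_real \<tau>))))\<^sup>2 / real p powr \<beta>)"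

definition dirichlet_char :: "nat \<Rightarrow> (nat \<Rightarrow> complex) \<Rightarrow> bool" where
  "dirichlet_char q chi \<longleftrightarrow> q \<ge> 1 \<and>
     (\<forall>m n. chi (m * n) = chi m * chi n) \<and>
     (\<forall>n. chi (n + q) = chi n) \<and>
     (\<forall>n. chi n \<noteq> 0 \<longleftrightarrow> coprime n q)"

definition principal_char :: "nat \<Rightarrow> (nat \<Rightarrow> complex) \<Rightarrow> bool" where
  "principal_char q chi \<longleftrightarrow> (\<forall>n. chi n = (if coprime n q then 1 else 0))"

end

theory Submission
  imports Defs "HOL-Number_Theory.Number_Theory"
begin

(* For p not dividing q, the Euler factor of Z(s, chi; y) at s = beta + i tau is the geometric
   sum of w^k, k <= nu_p, with w = r u, r = p^(-beta) and |u| = 1. Its modulus is at most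
   (sum of r^k) * exp (-r (1 - Re u)^2 / 16), while the factors with p | q are 1; multiplying
   over p gives the bound with c5 = 1/16 for every beta > 0. That beta(x, y) > 0 holds because
   -Z'/Z is continuous and strictly decreasing on [0, oo) (a Chebyshev sum inequality in each
   factor), equals psi(y)/2 > log x at 0 and tends to 0. *)

lemma norm_one_plus_scaled_le:
  fixes u :: complex
  assumes r0: "0 \<le> r" and r1: "r \<le> 1" and u1: "cmod u \<le> 1"
  shows "cmod (1 + of_real r * u) \<le> 1 + r - r * (1 - Re u) / 2"
proof -
  define a where "a = 1 - Re u"
  have a: "0 \<le> a" "a \<le> 2"
    using abs_Re_le_cmod[of u] u1 by (auto simp: a_def)
  have "(Re u)\<^sup>2 + (Im u)\<^sup>2 \<le> 1"
    using u1 by (simp add: cmod_power2[symmetric] power_le_one)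
  then have "r\<^sup>2 * ((Re u)\<^sup>2 + (Im u)\<^sup>2) \<le> r\<^sup>2"
    by (simp add: mult_left_le)
  moreover have "(cmod (1 + of_real r * u))\<^sup>2 = (1 + r * Re u)\<^sup>2 + (r * Im u)\<^sup>2"
    by (simp add: cmod_power2)
  ultimately have "(cmod (1 + of_real r * u))\<^sup>2 \<le> 1 + 2 * r * Re u + r\<^sup>2"
    by (simp add: power2_eq_square algebra_simps)
  also have "\<dots> \<le> (1 + r - r * a / 2)\<^sup>2"
  proof -
    have "0 \<le> r * a * (1 - r)" using r0 r1 a by simp
    moreover have "(1 + r - r * a / 2)\<^sup>2 - (1 + 2 * r * Re u + r\<^sup>2) = r * a * (1 - r) + (r * a)\<^sup>2 / 4"
      by (simp add: a_def power2_eq_square algebra_simps)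
    moreover have "0 \<le> (r * a)\<^sup>2 / 4" by simp
    ultimately show ?thesis by linarith
  qed
  finally have "(cmod (1 + of_real r * u))\<^sup>2 \<le> (1 + r - r * a / 2)\<^sup>2" .
  moreover have "0 \<le> 1 + r - r * a / 2"
    using r0 mult_left_mono[OF a(2) r0] by simp
  ultimately show ?thesis
    unfolding a_def[symmetric] by (rule power2_le_imp_le)
qed

lemma norm_geometric_sum_le:
  fixes u :: complex
  assumes r0: "0 \<le> r" and r1: "r \<le> 1" and u1: "cmod u \<le> 1" and n1: "1 \<le> n"
  shows "cmod (\<Sum>k\<le>n. (of_real r * u) ^ k) \<le> (\<Sum>k\<le>n. r ^ k) * (1 - r * (1 - Re u) / 8)"
proof -
  define z where "z = of_real r * u"
  define a where "a = 1 - Re u"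
  define c where "c = 1 - r * a / 8"
  have ra: "0 \<le> r * a" "r * a \<le> 2"
    using abs_Re_le_cmod[of u] u1 r0 r1 mult_mono[of r 1 a 2] by (auto simp: a_def)
  have z1: "cmod (1 + z) \<le> 1 + r - r * a / 2"
    using norm_one_plus_scaled_le[OF r0 r1 u1] by (simp add: z_def a_def)
  have z1': "cmod (1 + z) \<le> (1 + r) * c"
  proof -
    have "(1 + r) * (r * a) \<le> 2 * (r * a)"
      using r1 ra(1) by (intro mult_right_mono) auto
    moreover have "(1 + r) * c = 1 + r - (1 + r) * (r * a) / 8"
      by (simp add: c_def algebra_simps)
    ultimately show ?thesis using z1 ra by linarith
  qed
  have zk: "cmod (z ^ k) \<le> r ^ k" for k
    using u1 r0 by (simp add: z_def norm_power norm_mult power_mono mult_left_le)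
  \<comment> \<open>Terms are grouped in pairs \<open>z\<^sup>k (1 + z)\<close>, each of which loses the factor \<open>c\<close>.\<close>
  have "cmod (\<Sum>k\<le>n. z ^ k) \<le> (\<Sum>k\<le>n. r ^ k) * c" if "1 \<le> n" for n
    using that
  proof (induction n rule: less_induct)
    case (less n)
    consider "n = 1" | "n = 2" | "3 \<le> n"
      using less.prems by linarith
    then show ?case
    proof cases
      case 1
      then show ?thesis using z1' by (simp add: add.commute)
    next
      case 2
      have "cmod (\<Sum>k\<le>n. z ^ k) \<le> cmod (1 + z) + cmod (z ^ 2)"
        using 2 norm_triangle_ineq[of "1 + z" "z ^ 2"] by (simp add: numeral_2_eq_2 add.commute)
      also have "\<dots> \<le> 1 + r - r * a / 2 + r ^ 2"
        using z1 zk[of 2] by linarith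
      also have "\<dots> \<le> (\<Sum>k\<le>n. r ^ k) * c"
      proof -
        have "(1 + r + r ^ 2) * (r * a) \<le> 4 * (r * a)"
          using r0 r1 ra power_le_one[OF r0 r1, of 2] by (intro mult_right_mono) auto
        then show ?thesis using 2 by (simp add: numeral_2_eq_2 c_def algebra_simps)
      qed
      finally show ?thesis .
    next
      case 3
      define m where "m = n - 2"
      have m: "n = m + 2" "1 \<le> m" using 3 by (simp_all add: m_def)
      have split: "(\<Sum>k\<le>m + 2. f k) = (\<Sum>k\<le>m. f k) + f (m + 1) + f (m + 2)" for f :: "nat \<Rightarrow> 'a::comm_monoid_add"
        by (simp add: numeral_2_eq_2 add.assoc)
      have "cmod (\<Sum>k\<le>n. z ^ k) = cmod ((\<Sum>k\<le>m. z ^ k) + z ^ (m + 1) * (1 + z))"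
        using m by (simp add: split algebra_simps)
      also have "\<dots> \<le> cmod (\<Sum>k\<le>m. z ^ k) + cmod (z ^ (m + 1)) * cmod (1 + z)"
        by (metis norm_triangle_ineq norm_mult)
      also have "\<dots> \<le> (\<Sum>k\<le>m. r ^ k) * c + r ^ (m + 1) * ((1 + r) * c)"
        using less.IH[of m] m zk[of "m + 1"] z1' r0 by (intro add_mono mult_mono) auto
      also have "\<dots> = (\<Sum>k\<le>n. r ^ k) * c"
        using m by (simp add: split algebra_simps)
      finally show ?thesis .
    qed
  qed
  then show ?thesis using n1 by (simp add: z_def c_def a_def)
qed

(* euler_factor nu_p (log p) s = sum of p^(-k s) over k <= nu_p is the factor of Z(s, y) at p. *)
definition euler_factor :: "nat \<Rightarrow> real \<Rightarrow> real \<Rightarrow> real" where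
  "euler_factor n L s = (\<Sum>k\<le>n. exp (- (real k * L * s)))"

definition euler_factor_neg_deriv :: "nat \<Rightarrow> real \<Rightarrow> real \<Rightarrow> real" where
  "euler_factor_neg_deriv n L s = (\<Sum>k\<le>n. real k * L * exp (- (real k * L * s)))"

definition euler_factor_neg_logderiv :: "nat \<Rightarrow> real \<Rightarrow> real \<Rightarrow> real" where
  "euler_factor_neg_logderiv n L s = euler_factor_neg_deriv n L s / euler_factor n L s"

lemma euler_factor_ge_1: "1 \<le> euler_factor n L s"
proof -
  have "euler_factor n L s = 1 + (\<Sum>k\<in>{..n} - {0}. exp (- (real k * L * s)))"
    unfolding euler_factor_def by (subst sum.remove[of _ 0]) auto
  moreover have "0 \<le> (\<Sum>k\<in>{..n} - {0}. exp (- (real k * L * s)))"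
    by (intro sum_nonneg) auto
  ultimately show ?thesis by linarith
qed

lemma euler_factor_pos: "0 < euler_factor n L s"
  using euler_factor_ge_1[of n L s] by linarith

lemma has_real_derivative_euler_factor:
  "(euler_factor n L has_real_derivative - euler_factor_neg_deriv n L s) (at s)"
  unfolding euler_factor_def[abs_def] euler_factor_neg_deriv_def
  by (auto intro!: derivative_eq_intros sum.cong simp: sum_negf[symmetric])

lemma continuous_on_euler_factor_neg_logderiv: "continuous_on A (euler_factor_neg_logderiv n L)"
proof -
  have "continuous_on A (\<lambda>s. euler_factor_neg_deriv n L s / euler_factor n L s)"
    unfolding euler_factor_neg_deriv_def euler_factor_def
    by (intro continuous_intros) (use euler_factor_pos[unfolded euler_factor_def] in \<open>auto simp: less_imp_neq[symmetric]\<close>)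
  then show ?thesis
    by (simp add: euler_factor_neg_logderiv_def[abs_def])
qed

lemma euler_factor_neg_logderiv_0: "euler_factor_neg_logderiv n L 0 = real n * L / 2"
proof -
  have "euler_factor_neg_deriv n L 0 = L * (\<Sum>k\<le>n. real k)"
    unfolding euler_factor_neg_deriv_def by (simp add: sum_distrib_left mult.commute)
  also have "(\<Sum>k\<le>n. real k) = real n * (real n + 1) / 2"
    using double_gauss_sum[of n, where 'a = real] by (simp add: atLeast0AtMost)
  moreover have "euler_factor n L 0 = real n + 1"
    by (simp add: euler_factor_def)
  ultimately show ?thesis
    by (simp add: euler_factor_neg_logderiv_def field_simps add_pos_nonneg)
qed

lemma tendsto_euler_factor_neg_logderiv:
  assumes "0 < L"
  shows "(euler_factor_neg_logderiv n L \<longlongrightarrow> 0) at_top"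
proof -
  have exp_lim: "((\<lambda>s. exp (- (real k * L * s))) \<longlongrightarrow> (if k = 0 then 1 else 0)) at_top" for k
  proof (cases "k = 0")
    case False
    then have "filterlim (\<lambda>s. real k * L * s) at_top at_top"
      using assms by (intro filterlim_tendsto_pos_mult_at_top[OF tendsto_const _ filterlim_ident]) simp
    then have "filterlim (\<lambda>s. - (real k * L * s)) at_bot at_top"
      by (simp add: filterlim_uminus_at_top)
    then show ?thesis
      using False by (simp add: filterlim_compose[OF exp_at_bot])
  qed simp
  have "(euler_factor_neg_deriv n L \<longlongrightarrow> (\<Sum>k\<le>n. real k * L * (if k = 0 then 1 else 0))) at_top"
    unfolding euler_factor_neg_deriv_def[abs_def] by (intro tendsto_intros exp_lim)
  moreover have "(euler_factor n L \<longlongrightarrow> (\<Sum>k\<le>n. if k = 0 then 1 else 0)) at_top"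
    unfolding euler_factor_def[abs_def] by (intro tendsto_intros exp_lim)
  moreover have "(\<Sum>k\<le>n. real k * L * (if k = 0 then 1 else 0)) = 0"
    by (intro sum.neutral) simp
  ultimately have "(euler_factor_neg_logderiv n L \<longlongrightarrow> 0 / 1) at_top"
    unfolding euler_factor_neg_logderiv_def[abs_def]
    by (intro tendsto_divide) (simp_all add: sum.delta)
  then show ?thesis by simp
qed

lemma weighted_mean_index_less:
  fixes A B :: "nat \<Rightarrow> real"
  assumes AB: "\<And>j k. j < k \<Longrightarrow> A k * B j < A j * B k" and n: "1 \<le> n"
  shows "(\<Sum>k\<le>n. real k * A k) * (\<Sum>j\<le>n. B j) < (\<Sum>k\<le>n. real k * B k) * (\<Sum>j\<le>n. A j)"
proof -
  define c where "c j k = B k * A j - A k * B j" for j k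
  define D where "D = (\<Sum>j\<le>n. \<Sum>k\<le>n. real k * c j k)"
  have "(\<Sum>k\<le>n. real k * B k) * (\<Sum>j\<le>n. A j) - (\<Sum>k\<le>n. real k * A k) * (\<Sum>j\<le>n. B j) = D"
    unfolding D_def c_def sum_product
    by (subst sum.swap) (simp add: sum_subtractf[symmetric] algebra_simps)
  \<comment> \<open>Since \<open>c\<close> is antisymmetric, \<open>2 D\<close> is the sum of the nonnegative terms \<open>(k - j) c j k\<close>.\<close>
  moreover have "2 * D = (\<Sum>j\<le>n. \<Sum>k\<le>n. (real k - real j) * c j k)"
  proof -
    have "(\<Sum>j\<le>n. \<Sum>k\<le>n. real j * c j k) = (\<Sum>k\<le>n. \<Sum>j\<le>n. - (real j * c k j))"
      by (subst sum.swap) (simp add: c_def algebra_simps)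
    then have "(\<Sum>j\<le>n. \<Sum>k\<le>n. real j * c j k) = - D"
      unfolding D_def by (simp add: sum_negf)
    then show ?thesis
      unfolding D_def by (simp add: sum_subtractf left_diff_distrib)
  qed
  moreover have "0 < (\<Sum>j\<le>n. \<Sum>k\<le>n. (real k - real j) * c j k)"
  proof -
    have nonneg: "0 \<le> (real k - real j) * c j k" for j k
    proof (cases j k rule: linorder_cases)
      case less
      then show ?thesis using AB[OF less] by (simp add: c_def mult.commute)
    next
      case greater
      then show ?thesis using AB[OF greater] by (simp add: c_def mult.commute mult_nonpos_nonpos)
    qed simp
    have "0 < (real 1 - real 0) * c 0 1"
      using AB[of 0 1] by (simp add: c_def mult.commute)
    then have "0 < (\<Sum>k\<le>n. (real k - real 0) * c 0 k)"
      using n nonneg[of _ 0] by (intro sum_pos2[of _ 1]) auto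
    then show ?thesis
      using nonneg by - (rule sum_pos2[where i = 0], auto intro: sum_nonneg)
  qed
  ultimately show ?thesis by simp
qed

lemma euler_factor_neg_logderiv_strict_antimono:
  assumes L: "0 < L" and n: "1 \<le> n" and "s < t"
  shows "euler_factor_neg_logderiv n L t < euler_factor_neg_logderiv n L s"
proof -
  define A where "A k = exp (- (real k * L * t))" for k
  define B where "B k = exp (- (real k * L * s))" for k
  have AB: "A k * B j < A j * B k" if "j < k" for j k
  proof -
    have "0 < (real k - real j) * L * (t - s)"
      using that L \<open>s < t\<close> by simp
    then show ?thesis
      unfolding A_def B_def exp_add[symmetric] by (simp add: algebra_simps)
  qed
  have "euler_factor_neg_deriv n L t = L * (\<Sum>k\<le>n. real k * A k)"
    "euler_factor_neg_deriv n L s = L * (\<Sum>k\<le>n. real k * B k)"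
    unfolding euler_factor_neg_deriv_def A_def B_def by (simp_all add: sum_distrib_left algebra_simps)
  moreover have "euler_factor n L t = (\<Sum>k\<le>n. A k)" "euler_factor n L s = (\<Sum>k\<le>n. B k)"
    unfolding euler_factor_def A_def B_def by simp_all
  ultimately have "euler_factor_neg_deriv n L t * euler_factor n L s < euler_factor_neg_deriv n L s * euler_factor n L t"
    using weighted_mean_index_less[of A B n, OF AB n] L by (simp add: mult.assoc)
  then show ?thesis
    using euler_factor_pos by (simp add: euler_factor_neg_logderiv_def field_simps)
qed

lemma powr_quotient_eq_euler_factor:
  assumes b: "1 < b" and s: "0 < s"
  shows "(1 - b powr (- (real (n + 1) * s))) / (1 - b powr (- s)) = euler_factor n (ln b) s"
proof -
  define x where "x = b powr (- s)"
  have "0 < x" "x < 1"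
    using b s by (simp_all add: x_def powr_less_one)
  have "x ^ (n + 1) = x powr real (n + 1)"
    using \<open>0 < x\<close> by (rule powr_realpow[symmetric])
  also have "\<dots> = b powr (- (real (n + 1) * s))"
    by (simp add: x_def powr_powr mult.commute)
  finally have "b powr (- (real (n + 1) * s)) = x ^ (n + 1)" ..
  moreover note \<open>x < 1\<close>
  moreover have "euler_factor n (ln b) s = (\<Sum>k\<le>n. x ^ k)"
    unfolding euler_factor_def x_def using b
    by (intro sum.cong refl) (simp add: powr_def exp_of_nat_mult[symmetric] algebra_simps)
  ultimately show ?thesis
    by (simp add: sum_gp0 x_def[symmetric])
qed

lemma norm_euler_factor_twisted_le:
  fixes c :: complex
  assumes b: "1 < b" and c: "cmod c = 1" and \<beta>: "0 < \<beta>" and n: "1 \<le> n"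
  shows "cmod ((1 - c ^ (n + 1) * of_real b powr (- (of_nat (n + 1) * (of_real \<beta> + \<i> * of_real \<tau>))))
            / (1 - c * of_real b powr (- (of_real \<beta> + \<i> * of_real \<tau>))))
     \<le> euler_factor n (ln b) \<beta> * exp (- (1/16) * ((1 - Re (c * of_real b powr (- (\<i> * of_real \<tau>))))\<^sup>2 / b powr \<beta>))"
proof -
  define L where "L = ln b"
  define r where "r = exp (- (\<beta> * L))"
  define u where "u = c * of_real b powr (- (\<i> * of_real \<tau>))"
  define w where "w = c * of_real b powr (- (of_real \<beta> + \<i> * of_real \<tau>))"
  define a where "a = 1 - Re u"
  have powr_exp: "of_real b powr z = exp (z * of_real L)" for z :: complex
    using b by (simp add: powr_def Ln_of_real L_def)
  have "0 < \<beta> * L"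
    using b \<beta> by (simp add: L_def)
  then have r: "0 < r" "r < 1"
    by (simp_all add: r_def)
  have r_eq: "r = 1 / b powr \<beta>"
    using b by (simp add: r_def L_def powr_def exp_minus inverse_eq_divide)
  have u1: "cmod u = 1"
    using c by (simp add: u_def powr_exp norm_mult norm_exp_eq_Re)
  have w: "w = of_real r * u"
    by (simp add: w_def u_def r_def powr_exp exp_of_real[symmetric] exp_add[symmetric] algebra_simps)
  have exponent: "- (of_nat (n + 1) * s) * of_real L = of_nat (n + 1) * (- s * of_real L)" for s :: complex
    by (simp only: mult_minus_left mult_minus_right mult.assoc)
  have "c ^ (n + 1) * of_real b powr (- (of_nat (n + 1) * (of_real \<beta> + \<i> * of_real \<tau>))) = w ^ (n + 1)"
    unfolding w_def powr_exp exponent exp_of_nat_mult by (simp only: power_mult_distrib)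
  moreover have "w \<noteq> 1"
    using w u1 r by (auto simp: norm_mult dest: arg_cong[of _ _ norm])
  ultimately have quotient: "(1 - c ^ (n + 1) * of_real b powr (- (of_nat (n + 1) * (of_real \<beta> + \<i> * of_real \<tau>))))
            / (1 - c * of_real b powr (- (of_real \<beta> + \<i> * of_real \<tau>))) = (\<Sum>k\<le>n. w ^ k)"
    unfolding w_def[symmetric] by (simp add: sum_gp0)
  have factor: "euler_factor n (ln b) \<beta> = (\<Sum>k\<le>n. r ^ k)"
    unfolding euler_factor_def r_def L_def by (intro sum.cong refl) (simp add: exp_of_nat_mult[symmetric] algebra_simps)
  have linear_le_exp: "1 - r * a / 8 \<le> exp (- (r * a\<^sup>2 / 16))"
  proof -
    have "0 \<le> a" "a \<le> 2"
      using abs_Re_le_cmod[of u] u1 by (auto simp: a_def)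
    then have "r * a\<^sup>2 \<le> r * (2 * a)"
      using r by (intro mult_left_mono) (auto simp: power2_eq_square mult_right_mono)
    then have "exp (- (r * a / 8)) \<le> exp (- (r * a\<^sup>2 / 16))"
      by simp
    then show ?thesis
      using exp_ge_add_one_self[of "- (r * a / 8)"] by linarith
  qed
  have "cmod (\<Sum>k\<le>n. w ^ k) \<le> (\<Sum>k\<le>n. r ^ k) * (1 - r * a / 8)"
    using norm_geometric_sum_le[of r u n] u1 r n by (simp add: w a_def)
  also have "\<dots> \<le> (\<Sum>k\<le>n. r ^ k) * exp (- (r * a\<^sup>2 / 16))"
    using linear_le_exp r by (intro mult_left_mono sum_nonneg) auto
  finally have geometric: "cmod (\<Sum>k\<le>n. w ^ k) \<le> (\<Sum>k\<le>n. r ^ k) * exp (- (r * a\<^sup>2 / 16))" .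
  have "- (r * a\<^sup>2 / 16) = - (1/16) * (a\<^sup>2 / b powr \<beta>)"
    by (simp add: r_eq)
  with geometric show ?thesis
    unfolding quotient factor u_def[symmetric] a_def[symmetric] by simp
qed

lemma dirichlet_char_one:
  assumes "dirichlet_char q chi"
  shows "chi 1 = 1"
proof -
  have "chi 1 = chi 1 * chi 1" "chi 1 \<noteq> 0"
    using assms unfolding dirichlet_char_def by (metis mult_1, simp)
  then show ?thesis by simp
qed

lemma dirichlet_char_power:
  assumes "dirichlet_char q chi"
  shows "chi (n ^ k) = chi n ^ k"
proof (induction k)
  case 0
  show ?case using dirichlet_char_one[OF assms] by simp
next
  case (Suc k)
  then show ?case using assms by (simp add: dirichlet_char_def)
qed

lemma dirichlet_char_periodic:
  assumes "dirichlet_char q chi"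
  shows "chi (n + k * q) = chi n"
proof (induction k)
  case (Suc k)
  have "n + Suc k * q = (n + k * q) + q" by simp
  then show ?case using Suc assms unfolding dirichlet_char_def by metis
qed simp

lemma norm_dirichlet_char:
  assumes chi: "dirichlet_char q chi" and "coprime n q" and "0 < n"
  shows "cmod (chi n) = 1"
proof -
  have "[n ^ totient q = 1] (mod q)" "1 \<le> n ^ totient q"
    using euler_theorem[OF \<open>coprime n q\<close>] \<open>0 < n\<close> by simp_all
  then obtain k where "n ^ totient q = 1 + k * q"
    using cong_le_nat by (metis add.commute)
  then have "chi (n ^ totient q) = 1"
    using dirichlet_char_periodic[OF chi, of 1 k] dirichlet_char_one[OF chi] by simp
  then have "chi n ^ totient q = 1"
    by (simp add: dirichlet_char_power[OF chi])
  then have "cmod (chi n) ^ totient q = 1 ^ totient q"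
    by (metis norm_one norm_power power_one)
  moreover have "0 < totient q"
    using chi by (simp add: dirichlet_char_def)
  ultimately show ?thesis
    using power_eq_iff_eq_base norm_ge_zero zero_le_one by blast
qed

lemma dirichlet_char_prime_dvd:
  assumes "dirichlet_char q chi" and "prime p" and "p dvd q"
  shows "chi p = 0"
  using assms unfolding dirichlet_char_def by (meson coprime_absorb_left not_prime_unit)

definition primes_upto :: "real \<Rightarrow> nat set" where
  "primes_upto y = {p. prime p \<and> real p \<le> y}"

lemma finite_primes_upto: "finite (primes_upto y)"
proof (rule finite_subset)
  show "primes_upto y \<subseteq> {..nat \<lceil>y\<rceil>}"
    by (auto simp: primes_upto_def) linarith
qed simp

lemma ln_prime_pos: "prime p \<Longrightarrow> 0 < ln (real p)"
  using prime_gt_1_nat[of p] by simp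

lemma nu_ge_1:
  assumes "prime p" and "real p \<le> y"
  shows "1 \<le> nu y p"
proof -
  have "1 < real p"
    using prime_gt_1_nat[OF \<open>prime p\<close>] by simp
  then have "1 \<le> ln y / ln (real p)"
    using assms by simp
  then show ?thesis
    unfolding nu_def by linarith
qed

lemma Zq_eq_prod_euler_factor:
  assumes "0 < s"
  shows "Zq q s y = (\<Prod>p | prime p \<and> real p \<le> y \<and> \<not> p dvd q. euler_factor (nu y p) (ln (real p)) s)"
  unfolding Zq_def using assms
  by (intro prod.cong refl powr_quotient_eq_euler_factor) (auto dest: prime_gt_1_nat)

lemma Z_eq_prod_euler_factor:
  assumes "0 < s"
  shows "Z s y = (\<Prod>p\<in>primes_upto y. euler_factor (nu y p) (ln (real p)) s)"
proof -
  have "{p. prime p \<and> real p \<le> y \<and> \<not> p dvd 1} = primes_upto y"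
    by (auto simp: primes_upto_def)
  then show ?thesis
    unfolding Z_def Zq_eq_prod_euler_factor[OF assms] by simp
qed

lemma Z_pos: "0 < s \<Longrightarrow> 0 < Z s y"
  by (simp add: Z_eq_prod_euler_factor euler_factor_pos prod_pos)

definition Z_neg_logderiv :: "real \<Rightarrow> real \<Rightarrow> real" where
  "Z_neg_logderiv y s = (\<Sum>p\<in>primes_upto y. euler_factor_neg_logderiv (nu y p) (ln (real p)) s)"

lemma deriv_Z:
  assumes "0 < \<sigma>"
  shows "deriv (\<lambda>s. Z s y) \<sigma> = - Z \<sigma> y * Z_neg_logderiv y \<sigma>"
proof -
  define P where "P s = (\<Prod>p\<in>primes_upto y. euler_factor (nu y p) (ln (real p)) s)" for s
  have "(P has_real_derivative P \<sigma> * (\<Sum>p\<in>primes_upto y.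
          - euler_factor_neg_deriv (nu y p) (ln (real p)) \<sigma> / euler_factor (nu y p) (ln (real p)) \<sigma>)) (at \<sigma>)"
    unfolding P_def[abs_def]
    by (intro has_field_derivative_prod' has_real_derivative_euler_factor) (simp add: euler_factor_pos less_imp_neq[symmetric])
  then have "((\<lambda>s. Z s y) has_real_derivative P \<sigma> * (\<Sum>p\<in>primes_upto y.
          - euler_factor_neg_deriv (nu y p) (ln (real p)) \<sigma> / euler_factor (nu y p) (ln (real p)) \<sigma>)) (at \<sigma>)"
    by (rule has_field_derivative_transform_within_open[where S = "{0<..}"])
      (use assms in \<open>auto simp: P_def Z_eq_prod_euler_factor\<close>)
  then show ?thesis
    using assms by (simp add: DERIV_imp_deriv P_def Z_eq_prod_euler_factor Z_neg_logderiv_def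
        euler_factor_neg_logderiv_def sum_negf)
qed

lemma Z_neg_logderiv_0: "Z_neg_logderiv y 0 = psi y / 2"
  by (simp add: Z_neg_logderiv_def euler_factor_neg_logderiv_0 psi_def primes_upto_def sum_divide_distrib)

lemma continuous_on_Z_neg_logderiv: "continuous_on A (Z_neg_logderiv y)"
  unfolding Z_neg_logderiv_def[abs_def]
  by (intro continuous_on_sum continuous_on_euler_factor_neg_logderiv)

lemma tendsto_Z_neg_logderiv: "(Z_neg_logderiv y \<longlongrightarrow> 0) at_top"
proof -
  have "(Z_neg_logderiv y \<longlongrightarrow> (\<Sum>p\<in>primes_upto y. 0)) at_top"
    unfolding Z_neg_logderiv_def[abs_def]
    by (intro tendsto_sum tendsto_euler_factor_neg_logderiv) (simp add: primes_upto_def ln_prime_pos)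
  then show ?thesis by simp
qed

lemma Z_neg_logderiv_strict_antimono:
  assumes "2 \<le> y" and "s < t"
  shows "Z_neg_logderiv y t < Z_neg_logderiv y s"
  unfolding Z_neg_logderiv_def
proof (rule sum_strict_mono[OF finite_primes_upto])
  show "primes_upto y \<noteq> {}"
    using assms by (auto simp: primes_upto_def intro!: exI[of _ 2])
  show "euler_factor_neg_logderiv (nu y p) (ln (real p)) t < euler_factor_neg_logderiv (nu y p) (ln (real p)) s"
    if "p \<in> primes_upto y" for p
    using that assms by (intro euler_factor_neg_logderiv_strict_antimono nu_ge_1) (auto simp: primes_upto_def ln_prime_pos)
qed

lemma ex1_pos_crossing_strict_antimono:
  fixes f :: "real \<Rightarrow> real"
  assumes cont: "continuous_on {0..} f" and dec: "\<And>s t. 0 \<le> s \<Longrightarrow> s < t \<Longrightarrow> f t < f s"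
    and lim: "(f \<longlongrightarrow> l) at_top" and "l < c" and "c < f 0"
  shows "\<exists>!\<sigma>. 0 < \<sigma> \<and> f \<sigma> = c"
proof -
  obtain N where N: "0 \<le> N" "f N < c"
    using eventually_conj[OF order_tendstoD(2)[OF lim \<open>l < c\<close>] eventually_ge_at_top[of 0]]
    unfolding eventually_at_top_linorder by auto
  obtain \<sigma> where \<sigma>: "0 \<le> \<sigma>" "\<sigma> \<le> N" "f \<sigma> = c"
    using IVT2'[of f N c 0] N \<open>c < f 0\<close> continuous_on_subset[OF cont] by fastforce
  then have "0 < \<sigma>"
    using \<open>c < f 0\<close> by (cases "\<sigma> = 0") auto
  show ?thesis
  proof (rule ex1I[of _ \<sigma>])
    fix t assume "0 < t \<and> f t = c"
    then show "t = \<sigma>"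
      using dec[of t \<sigma>] dec[of \<sigma> t] \<open>0 < \<sigma>\<close> \<sigma> by (cases t \<sigma> rule: linorder_cases) auto
  qed (use \<open>0 < \<sigma>\<close> \<sigma> in auto)
qed

lemma saddle_pos:
  assumes "2 \<le> y" and "y \<le> x" and "2 * ln x < psi y"
  shows "0 < saddle x y"
proof -
  have "(\<sigma> > 0 \<and> - deriv (\<lambda>s. Z s y) \<sigma> / Z \<sigma> y = ln x) \<longleftrightarrow> (0 < \<sigma> \<and> Z_neg_logderiv y \<sigma> = ln x)" for \<sigma>
    using deriv_Z[of \<sigma> y] Z_pos[of \<sigma> y] by (cases "0 < \<sigma>") auto
  moreover have "0 < ln x"
    using assms by simp
  then have "\<exists>!\<sigma>. 0 < \<sigma> \<and> Z_neg_logderiv y \<sigma> = ln x"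
    using assms
    by (intro ex1_pos_crossing_strict_antimono[OF _ _ tendsto_Z_neg_logderiv]
        continuous_on_Z_neg_logderiv Z_neg_logderiv_strict_antimono) (auto simp: Z_neg_logderiv_0)
  ultimately show ?thesis
    unfolding saddle_def using theI'[where P = "\<lambda>\<sigma>. 0 < \<sigma> \<and> Z_neg_logderiv y \<sigma> = ln x"] by simp
qed

lemma norm_Zchi_div_Zq_le:
  assumes chi: "dirichlet_char q chi" and \<beta>: "0 < \<beta>"
  shows "cmod (Zchi (of_real \<beta> + \<i> * of_real \<tau>) chi y / of_real (Zq q \<beta> y))
       \<le> exp (- (1/16) * W q y \<tau> chi \<beta>)"
proof -
  define Q where "Q = {p. prime p \<and> real p \<le> y \<and> \<not> p dvd q}"
  define f where "f p = (1 - chi p ^ (nu y p + 1) * of_nat p powr (- (of_nat (nu y p + 1) * (of_real \<beta> + \<i> * of_real \<tau>))))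
            / (1 - chi p * of_nat p powr (- (of_real \<beta> + \<i> * of_real \<tau>)))" for p
  define e where "e p = exp (- (1/16) * ((1 - Re (chi p * of_nat p powr (- (\<i> * of_real \<tau>))))\<^sup>2 / real p powr \<beta>))" for p
  have Q: "Q \<subseteq> primes_upto y"
    by (auto simp: Q_def primes_upto_def)
  then have "finite Q"
    using finite_primes_upto by (rule finite_subset)
  have "Zchi (of_real \<beta> + \<i> * of_real \<tau>) chi y = (\<Prod>p\<in>primes_upto y. f p)"
    unfolding Zchi_def f_def primes_upto_def by simp
  also have "\<dots> = (\<Prod>p\<in>Q. f p)"
    using Q by (intro prod.mono_neutral_right finite_primes_upto)
      (auto simp: f_def Q_def primes_upto_def dirichlet_char_prime_dvd[OF chi])
  finally have "cmod (Zchi (of_real \<beta> + \<i> * of_real \<tau>) chi y) = (\<Prod>p\<in>Q. cmod (f p))"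
    by (simp add: prod_norm)
  also have "\<dots> \<le> (\<Prod>p\<in>Q. euler_factor (nu y p) (ln (real p)) \<beta> * e p)"
  proof (intro prod_mono conjI norm_ge_zero)
    fix p assume "p \<in> Q"
    then have "prime p" "real p \<le> y" "coprime p q"
      by (auto simp: Q_def prime_imp_coprime)
    then show "cmod (f p) \<le> euler_factor (nu y p) (ln (real p)) \<beta> * e p"
      using norm_euler_factor_twisted_le[of "real p" "chi p" \<beta> "nu y p" \<tau>] \<beta>
        norm_dirichlet_char[OF chi] nu_ge_1 prime_gt_1_nat prime_gt_0_nat
      by (simp add: f_def e_def)
  qed
  also have "\<dots> = Zq q \<beta> y * exp (- (1/16) * W q y \<tau> chi \<beta>)"
    using \<open>finite Q\<close> \<beta>
    by (simp add: prod.distrib Zq_eq_prod_euler_factor W_def e_def Q_def[symmetric]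
        exp_sum[symmetric] sum_distrib_left sum_negf)
  finally have "cmod (Zchi (of_real \<beta> + \<i> * of_real \<tau>) chi y) \<le> Zq q \<beta> y * exp (- (1/16) * W q y \<tau> chi \<beta>)" .
  moreover have "0 < Zq q \<beta> y"
    using \<beta> by (simp add: Zq_eq_prod_euler_factor euler_factor_pos prod_pos)
  ultimately show ?thesis
    by (simp add: norm_divide field_simps)
qed

theorem mainTheorem11:
  shows "\<exists>c0 > 0. \<exists>c5 > 0. \<forall>x y q chi \<tau>.
     2 \<le> y \<and> y \<le> x \<and> psi y > 2 * ln x \<and>
     real q \<le> y powr (c0 / ln (ln y)) \<and>
     dirichlet_char q chi \<and> \<not> principal_char q chi \<longrightarrow>
     cmod (Zchi (of_real (saddle x y) + \<i> * of_real \<tau>) chi y / of_real (Zq q (saddle x y) y))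
       \<le> exp (- c5 * W q y \<tau> chi (saddle x y))"
proof -
  have "cmod (Zchi (of_real (saddle x y) + \<i> * of_real \<tau>) chi y / of_real (Zq q (saddle x y) y))
       \<le> exp (- (1/16) * W q y \<tau> chi (saddle x y))"
    if "2 \<le> y" "y \<le> x" "2 * ln x < psi y" "dirichlet_char q chi" for x y q chi \<tau>
    using norm_Zchi_div_Zq_le[OF that(4) saddle_pos[OF that(1-3)]] .
  \<comment> \<open>The bound holds for every Dirichlet character to every modulus.\<close>
  then show ?thesis
    by (intro exI[of _ "1::real"]) (auto intro!: exI[of _ "1/16::real"])
qed

end
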